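(* Let $d\in\{1,2,3\}$ and let $K\subset M^{m\times n}$ be a $d$-dimensional subspace without Rank-$1$ connections, with $K=P_K(\mathbb{R}^d)$ where $P_K(z)=(a_{ij}\cdot z)_{1\le i\le m,1\le j\le n}$, $a_{ij}\in\mathbb{R}^d$, is a linear isomorphism onto $K$. If $\dim\mathrm{Span}\{a_{i_0l}:l=1,\dots,n\}=1$ for some $i_0$, or $\dim\mathrm{Span}\{a_{lj_0}:l=1,\dots,m\}=1$ for some $j_0$, then there exists $\beta\in\mathbb{R}^{q_0}\setminus\{0\}$ with $\sum_{k=1}^{q_0}\beta_kM_k(X)\ge0$ for all $X\in K$ and $\sum_k\beta_kM_k\not\equiv0$ on $K$, where $M_1,\dots,M_{q_0}$ are all the $2\times2$ minors of $m\times n$ matrices.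
   Context: A set has Rank-$1$ connections if it contains $A\ne B$ with $\mathrm{Rank}(A-B)=1$. *)

theory Defs
  imports "HOL-Analysis.Analysis"
begin

definition has_rank_one_connections :: "(real^'n^'m) set \<Rightarrow> bool" where
  "has_rank_one_connections K \<longleftrightarrow> (\<exists>A\<in>K. \<exists>B\<in>K. A \<noteq> B \<and> rank (A - B) = 1)"

definition minor_idx :: "('m::linorder \<times> 'm \<times> 'n::linorder \<times> 'n) set" where
  "minor_idx = {(i1, i2, j1, j2). i1 < i2 \<and> j1 < j2}"

definition minor2 :: "real^'n^'m \<Rightarrow> ('m \<times> 'm \<times> 'n \<times> 'n) \<Rightarrow> real" where
  "minor2 X q = (case q of (i1, i2, j1, j2) \<Rightarrow>
      X$i1$j1 * X$i2$j2 - X$i1$j2 * X$i2$j1)"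

definition PK :: "('m \<Rightarrow> 'n \<Rightarrow> real^'d) \<Rightarrow> real^'d \<Rightarrow> real^'n^'m" where
  "PK a z = (\<chi> i j. a i j \<bullet> z)"

end

theory Submission
  imports Defs
begin

text \<open>Suppose row i0 of X = P_K(z) is (c_j (v \<bullet> z))_j with c_js \<noteq> 0. Then the minor with rows
  i0, i and columns j, js equals -(v \<bullet> z) Y_ij, where Y_ij = c_js X_ij - c_j X_i,js. The linear map
  z \<mapsto> Y is injective: Y = 0 makes all rows of X parallel to c, and K contains no matrix of rank
  one. Hence v \<bullet> z = \<Sum> W_ij Y_ij for some W, and the combination -\<Sum> W_ij M_(i0,i,j,js) equals
  (v \<bullet> z)^2 on K, which is nonnegative and nonzero at z = v. The column case follows by
  transposition.\<close>

definition minor_form ::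
    "('m \<times> 'm \<times> 'n \<times> 'n \<Rightarrow> real) \<Rightarrow> real^'n::{finite,linorder}^'m::{finite,linorder} \<Rightarrow> real" where
  "minor_form \<beta> X = (\<Sum>q\<in>minor_idx. \<beta> q * minor2 X q)"

definition minor_combination :: "(real^'n::{finite,linorder}^'m::{finite,linorder} \<Rightarrow> real) \<Rightarrow> bool" where
  "minor_combination f \<longleftrightarrow> (\<exists>\<beta>. f = minor_form \<beta>)"

lemma minor_combination_zero: "minor_combination (\<lambda>X. 0)"
  unfolding minor_combination_def minor_form_def by (intro exI[of _ "\<lambda>q. 0"]) simp

lemma minor_combination_scale:
  assumes "minor_combination f"
  shows "minor_combination (\<lambda>X. t * f X)"
proof -
  from assms obtain \<beta> where "f = minor_form \<beta>" by (auto simp: minor_combination_def)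
  then have "(\<lambda>X. t * f X) = minor_form (\<lambda>q. t * \<beta> q)"
    by (simp add: fun_eq_iff minor_form_def sum_distrib_left mult.assoc)
  then show ?thesis by (auto simp: minor_combination_def)
qed

lemma minor_combination_add:
  assumes "minor_combination f" "minor_combination g"
  shows "minor_combination (\<lambda>X. f X + g X)"
proof -
  from assms obtain \<beta> \<gamma> where "f = minor_form \<beta>" "g = minor_form \<gamma>"
    by (auto simp: minor_combination_def)
  then have "(\<lambda>X. f X + g X) = minor_form (\<lambda>q. \<beta> q + \<gamma> q)"
    by (simp add: fun_eq_iff minor_form_def sum.distrib distrib_right)
  then show ?thesis by (auto simp: minor_combination_def)
qed

lemma minor_combination_sum:
  "finite S \<Longrightarrow> (\<And>s. s \<in> S \<Longrightarrow> minor_combination (f s)) \<Longrightarrow>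
    minor_combination (\<lambda>X. \<Sum>s\<in>S. f s X)"
  by (induction S rule: finite_induct) (auto intro: minor_combination_zero minor_combination_add)

lemma minor2_swap_rows: "minor2 X (i2, i1, j1, j2) = - minor2 X (i1, i2, j1, j2)"
  by (simp add: minor2_def)

lemma minor2_swap_cols: "minor2 X (i1, i2, j2, j1) = - minor2 X (i1, i2, j1, j2)"
  by (simp add: minor2_def)

lemma minor2_same_rows: "minor2 X (i, i, j1, j2) = 0"
  by (simp add: minor2_def)

lemma minor2_same_cols: "minor2 X (i1, i2, j, j) = 0"
  by (simp add: minor2_def)

lemma minor_combination_sorted_minor2:
  fixes i1 i2 :: "'m::{finite,linorder}" and j1 j2 :: "'n::{finite,linorder}"
  assumes "i1 < i2" "j1 < j2"
  shows "minor_combination (\<lambda>X. minor2 X (i1, i2, j1, j2))"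
proof -
  have "minor_form (\<lambda>q. if q = (i1, i2, j1, j2) then 1 else 0) X
      = (\<Sum>q\<in>minor_idx. if q = (i1, i2, j1, j2) then minor2 X q else 0)" for X
    unfolding minor_form_def by (rule sum.cong) auto
  also have "\<dots> X = minor2 X (i1, i2, j1, j2)" for X
    using assms by (simp add: minor_idx_def)
  finally have "(\<lambda>X. minor2 X (i1, i2, j1, j2)) = minor_form (\<lambda>q. if q = (i1, i2, j1, j2) then 1 else 0)"
    by (simp add: fun_eq_iff)
  then show ?thesis by (auto simp: minor_combination_def)
qed

lemma minor_combination_minor2:
  fixes i1 i2 :: "'m::{finite,linorder}" and j1 j2 :: "'n::{finite,linorder}"
  shows "minor_combination (\<lambda>X. minor2 X (i1, i2, j1, j2))"
proof -
  have cols: "minor_combination (\<lambda>X. minor2 X (i1, i2, j1, j2))"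
    if "i1 < i2" for i1 i2 :: 'm
  proof (cases j1 j2 rule: linorder_cases)
    case greater
    then have "minor_combination (\<lambda>X. (-1) * minor2 X (i1, i2, j2, j1))"
      using that by (intro minor_combination_scale minor_combination_sorted_minor2)
    then show ?thesis by (simp add: minor2_swap_cols[of _ i1 i2 j2 j1])
  qed (simp_all add: that minor_combination_sorted_minor2 minor2_same_cols minor_combination_zero)
  show ?thesis
  proof (cases i1 i2 rule: linorder_cases)
    case greater
    then have "minor_combination (\<lambda>X. (-1) * minor2 X (i2, i1, j1, j2))"
      by (intro minor_combination_scale cols)
    then show ?thesis by (simp add: minor2_swap_rows[of _ i2 i1 j1 j2])
  qed (simp_all add: cols minor2_same_rows minor_combination_zero)
qed

lemma minor_form_transpose:
  "minor_form \<beta> (transpose X) = minor_form (\<lambda>(i1, i2, j1, j2). \<beta> (j1, j2, i1, i2)) X"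
  unfolding minor_form_def
  by (rule sum.reindex_bij_witness[where i="\<lambda>(i1, i2, j1, j2). (j1, j2, i1, i2)"
                                    and j="\<lambda>(j1, j2, i1, i2). (i1, i2, j1, j2)"])
     (auto simp: minor_idx_def minor2_def transpose_def)

lemma rank_le_1_if_rows_parallel:
  fixes X :: "real^'n^'m"
  assumes "\<And>i. X $ i \<in> span {c}"
  shows "rank X \<le> 1"
proof -
  have "rows X \<subseteq> span {c}"
    using assms by (auto simp: rows_def row_def)
  then have "dim (rows X) \<le> card {c}"
    by (intro dim_le_card) auto
  then show ?thesis by (simp add: row_rank_def)
qed

lemma transpose_diff: "transpose (A - B) = transpose A - transpose B"
  by (simp add: transpose_def vec_eq_iff)

lemma has_rank_one_connections_transpose:
  "has_rank_one_connections (transpose ` K) \<longleftrightarrow> has_rank_one_connections K"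
  unfolding has_rank_one_connections_def
  by (auto simp: rank_transpose simp flip: transpose_diff)

lemma linear_PK: "linear (PK a)"
  by (rule linearI) (auto simp: PK_def vec_eq_iff inner_add_right)

text \<open>Not a simp rule: its left-hand side matches every PK b, so rewriting with it loops.\<close>
lemma PK_transpose: "PK (\<lambda>j i. a i j) z = transpose (PK a z)"
  by (simp add: PK_def transpose_def vec_eq_iff)

lemma inner_matrix_eq_sum: "(W :: real^'n^'m) \<bullet> M = (\<Sum>i\<in>UNIV. \<Sum>j\<in>UNIV. W $ i $ j * M $ i $ j)"
  by (simp add: inner_vec_def)

lemma linear_functional_factors_through_inj:
  fixes \<phi> :: "'a::euclidean_space \<Rightarrow> real" and Y :: "'a \<Rightarrow> 'b::euclidean_space"
  assumes "linear \<phi>" "linear Y" "inj Y"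
  obtains w where "\<And>x. \<phi> x = w \<bullet> Y x"
proof -
  obtain g where g: "linear g" "g \<circ> Y = id"
    using linear_injective_left_inverse[OF assms(2,3)] by blast
  have "\<phi> x = adjoint (\<phi> \<circ> g) 1 \<bullet> Y x" for x
  proof -
    have "\<phi> x = (\<phi> \<circ> g) (Y x) \<bullet> 1"
      using g(2) by (metis comp_apply id_apply inner_real_def mult.right_neutral)
    also have "\<dots> = adjoint (\<phi> \<circ> g) 1 \<bullet> Y x"
      using adjoint_clauses(2)[OF linear_compose[OF g(1) assms(1)]] by simp
    finally show ?thesis .
  qed
  then show ?thesis using that by blast
qed

lemma dim_span_eq_1_multiples:
  fixes f :: "'i \<Rightarrow> 'a::euclidean_space"
  assumes "dim (span (range f)) = 1"
  obtains v c j where "v \<noteq> 0" "\<And>l. f l = c l *\<^sub>R v" "c j \<noteq> 0"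
proof -
  obtain B where B: "B \<subseteq> span (range f)" "independent B" "span (range f) \<subseteq> span B"
    "card B = dim (span (range f))"
    by (rule basis_exists)
  have "card B = 1"
    using B(4) assms by simp
  then obtain v where "B = {v}"
    by (rule card_1_singletonE)
  then have v: "v \<noteq> 0"
    using B(2) dependent_zero[of B] by blast
  have "\<exists>t. f l = t *\<^sub>R v" for l
    using B(3) \<open>B = {v}\<close> span_base[of "f l" "range f"] by (auto simp: span_singleton)
  then obtain c where c: "\<And>l. f l = c l *\<^sub>R v"
    by metis
  have "dim (range f) \<noteq> 0"
    using assms by (simp add: dim_span)
  then obtain j where "f j \<noteq> 0"
    using dim_eq_0[of "range f"] by auto
  then have "c j \<noteq> 0"
    using c by auto
  with v c show ?thesis using that by blast
qed

lemma eq_0_if_rank_PK_le_1: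
  assumes inj: "inj (PK a)"
    and norank1: "\<not> has_rank_one_connections (range (PK a))"
    and "rank (PK a z) \<le> 1"
  shows "z = 0"
proof -
  have "rank (PK a z) \<noteq> 1"
    using norank1 linear_0[OF linear_PK, of a] unfolding has_rank_one_connections_def
    by (metis diff_zero rangeI rank_0 zero_neq_one)
  with assms(3) have "rank (PK a z) = 0"
    by linarith
  then have "PK a z = 0"
    by (simp add: rank_eq_0)
  then show ?thesis
    using inj linear_inj_iff_eq_0[OF linear_PK] by blast
qed

lemma minor_form_eq_square_if_row_dim_1:
  fixes a :: "'m::{finite,linorder} \<Rightarrow> 'n::{finite,linorder} \<Rightarrow> real^'d"
  assumes inj: "inj (PK a)"
    and norank1: "\<not> has_rank_one_connections (range (PK a))"
    and row: "dim (span (range (a i0))) = 1"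
  obtains \<beta> v where "v \<noteq> 0" "\<And>z. minor_form \<beta> (PK a z) = (v \<bullet> z)\<^sup>2"
proof -
  obtain v c js where v: "v \<noteq> 0" and c: "\<And>l. a i0 l = c l *\<^sub>R v" and js: "c js \<noteq> 0"
    using dim_span_eq_1_multiples[OF row] by blast
  define Y where "Y z = (\<chi> i j. c js * PK a z $ i $ j - c j * PK a z $ i $ js)" for z
  have linY: "linear Y"
    by (rule linearI) (auto simp: Y_def PK_def vec_eq_iff algebra_simps)
  have minor: "minor2 (PK a z) (i0, i, j, js) = - (v \<bullet> z) * Y z $ i $ j" for z i j
    by (simp add: minor2_def Y_def PK_def c algebra_simps)
  have "inj Y"
    unfolding linear_inj_iff_eq_0[OF linY]
  proof (intro allI impI)
    fix z assume "Y z = 0"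
    then have "c js * PK a z $ i $ j - c j * PK a z $ i $ js = 0" for i j
      by (simp add: Y_def vec_eq_iff)
    then have "PK a z $ i = (PK a z $ i $ js / c js) *\<^sub>R (\<chi> j. c j)" for i
      using js by (auto simp: vec_eq_iff field_simps)
    then have "rank (PK a z) \<le> 1"
      by (intro rank_le_1_if_rows_parallel[of _ "\<chi> j. c j"]) (metis span_base span_scale singletonI)
    then show "z = 0"
      using eq_0_if_rank_PK_le_1[OF inj norank1] by blast
  qed
  then obtain W where W: "\<And>z. v \<bullet> z = W \<bullet> Y z"
    using linear_functional_factors_through_inj[OF bounded_linear.linear[OF bounded_linear_inner_right] linY]
    by blast
  have "minor_combination (\<lambda>X. \<Sum>i\<in>UNIV. \<Sum>j\<in>UNIV. (- W $ i $ j) * minor2 X (i0, i, j, js))"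
    by (intro minor_combination_sum minor_combination_scale minor_combination_minor2) auto
  then obtain \<beta> where \<beta>: "(\<lambda>X. \<Sum>i\<in>UNIV. \<Sum>j\<in>UNIV. (- W $ i $ j) * minor2 X (i0, i, j, js)) = minor_form \<beta>"
    unfolding minor_combination_def by blast
  have "minor_form \<beta> (PK a z) = (v \<bullet> z)\<^sup>2" for z
  proof -
    have "minor_form \<beta> (PK a z) = (\<Sum>i\<in>UNIV. \<Sum>j\<in>UNIV. (- W $ i $ j) * (- (v \<bullet> z) * Y z $ i $ j))"
      by (simp add: \<beta>[symmetric] minor)
    also have "\<dots> = (v \<bullet> z) * (W \<bullet> Y z)"
      by (simp add: inner_matrix_eq_sum sum_distrib_left mult.left_commute)
    finally show ?thesis by (simp add: W[symmetric] power2_eq_square)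
  qed
  with v show ?thesis using that by blast
qed

lemma minor_form_eq_square_if_col_dim_1:
  fixes a :: "'m::{finite,linorder} \<Rightarrow> 'n::{finite,linorder} \<Rightarrow> real^'d"
  assumes inj: "inj (PK a)"
    and norank1: "\<not> has_rank_one_connections (range (PK a))"
    and col: "dim (span (range (\<lambda>l. a l j0))) = 1"
  obtains \<beta> v where "v \<noteq> 0" "\<And>z. minor_form \<beta> (PK a z) = (v \<bullet> z)\<^sup>2"
proof -
  let ?a = "\<lambda>j i. a i j"
  have "inj (PK ?a)"
    using inj by (auto simp: inj_def PK_transpose[of a])
  moreover have "range (PK ?a) = transpose ` range (PK a)"
    by (auto simp: PK_transpose[of a])
  then have "\<not> has_rank_one_connections (range (PK ?a))"
    using norank1 by (simp add: has_rank_one_connections_transpose)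
  ultimately obtain \<beta> v where v: "v \<noteq> 0" and sq: "\<And>z. minor_form \<beta> (PK ?a z) = (v \<bullet> z)\<^sup>2"
    using minor_form_eq_square_if_row_dim_1[of ?a j0] col by blast
  show ?thesis
  proof (rule that[OF v])
    show "minor_form (\<lambda>(i1, i2, j1, j2). \<beta> (j1, j2, i1, i2)) (PK a z) = (v \<bullet> z)\<^sup>2" for z
      using sq[of z] by (simp add: PK_transpose[of a] minor_form_transpose)
  qed
qed

theorem lemma4:
  fixes K :: "(real^'n::{finite,linorder}^'m::{finite,linorder}) set"
    and a :: "'m \<Rightarrow> 'n \<Rightarrow> real^'d"
  assumes d: "CARD('d) \<in> {1, 2, 3}"
    and sub: "subspace K"
    and dimK: "dim K = CARD('d)"
    and norank1: "\<not> has_rank_one_connections K"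
    and iso: "inj (PK a)" "range (PK a) = K"
    and span1: "(\<exists>i0. dim (span (range (a i0))) = 1) \<or>
                (\<exists>j0. dim (span (range (\<lambda>l. a l j0))) = 1)"
  shows "\<exists>\<beta> :: ('m \<times> 'm \<times> 'n \<times> 'n) \<Rightarrow> real.
           (\<exists>q\<in>minor_idx. \<beta> q \<noteq> 0) \<and>
           (\<forall>X\<in>K. (\<Sum>q\<in>minor_idx. \<beta> q * minor2 X q) \<ge> 0) \<and>
           (\<exists>X\<in>K. (\<Sum>q\<in>minor_idx. \<beta> q * minor2 X q) \<noteq> 0)"
proof -
  obtain \<beta> v where v: "v \<noteq> 0" and sq: "\<And>z. minor_form \<beta> (PK a z) = (v \<bullet> z)\<^sup>2"
    using span1
  proof (elim disjE exE)
    fix i0 assume "dim (span (range (a i0))) = 1"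
    then show thesis
      using minor_form_eq_square_if_row_dim_1[of a i0] iso norank1 that by blast
  next
    fix j0 assume "dim (span (range (\<lambda>l. a l j0))) = 1"
    then show thesis
      using minor_form_eq_square_if_col_dim_1[of a j0] iso norank1 that by blast
  qed
  have nonzero: "minor_form \<beta> (PK a v) \<noteq> 0"
    using sq v by simp
  show ?thesis
  proof (intro exI[of _ \<beta>] conjI, fold minor_form_def)
    show "\<exists>q\<in>minor_idx. \<beta> q \<noteq> 0"
      using nonzero by (auto simp: minor_form_def intro: ccontr)
    show "\<forall>X\<in>K. minor_form \<beta> X \<ge> 0"
      using iso(2) sq by auto
    show "\<exists>X\<in>K. minor_form \<beta> X \<noteq> 0"
      using iso(2) nonzero by blast
  qed
qed

end
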